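(* Let $\mathcal{D}\subset\mathbb{R}^N$ be open, bounded, connected, and assume the boundary point $y_0\in\partial\mathcal{D}$ is walk-regular. Then for every continuous $F:\partial\mathcal{D}\to\mathbb{R}$, the functions $u^\epsilon(x)=\mathbb{E}[F\circ X^{\epsilon,x}]$ satisfy: for every $\eta>0$ there exist $\hat\delta>0$ and $\hat\epsilon\in(0,1)$ such that $|u^\epsilon(x_0)-F(y_0)|\le\eta$ for all $\epsilon\in(0,\hat\epsilon)$ and all $x_0\in B_{\hat\delta}(y_0)\cap\mathcal{D}$.
   Context: Probability space: $\Omega_1=B_1(0)\subset\mathbb{R}^N$ with Borel $\sigma$-algebra and normalised Lebesgue measure; $(\Omega,\mathcal{F},\mathbb{P})$ is the countable product $\Omega=(\Omega_1)^{\mathbb{N}}$, $\omega=\{w_i\}_{i\ge1}$. The $\epsilon$-ball walk started at $x\in\mathcal{D}$: $X_0^{\epsilon,x}\equiv x$, $X_n^{\epsilon,x}=X_{n-1}^{\epsilon,x}+\big(\epsilon\wedge\operatorname{dist}(X_{n-1}^{\epsilon,x},\partial\mathcal{D})\big)w_n$ for $n\ge1$; it converges $\mathbb{P}$-a.s. to a random variable $X^{\epsilon,x}:\Omega\to\partial\mathcal{D}$. A point $y_0\in\partial\mathcal{D}$ is walk-regular if for every $\eta,\delta>0$ there exist $\hat\delta\in(0,\delta)$ and $\hat\epsilon\in(0,1)$ such that $\mathbb{P}(X^{\epsilon,x_0}\in B_\delta(y_0))\ge1-\eta$ for all $\epsilon\in(0,\hat\epsilon)$ and all $x_0\in B_{\hat\delta}(y_0)\cap\mathcal{D}$.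 *)

theory Defs
  imports "HOL-Probability.Probability"
begin

definition ball_space :: "'a::euclidean_space measure" where
  "ball_space = uniform_measure lborel (ball 0 1)"

text \<open>The countable product space; omega n is the step w_(n+1).\<close>
definition walk_space :: "(nat \<Rightarrow> 'a::euclidean_space) measure" where
  "walk_space = PiM UNIV (\<lambda>_. ball_space)"

fun ball_walk :: "'a::euclidean_space set \<Rightarrow> real \<Rightarrow> 'a \<Rightarrow> (nat \<Rightarrow> 'a) \<Rightarrow> nat \<Rightarrow> 'a" where
  "ball_walk D \<epsilon> x \<omega> 0 = x"
| "ball_walk D \<epsilon> x \<omega> (Suc n) =
     ball_walk D \<epsilon> x \<omega> n + min \<epsilon> (infdist (ball_walk D \<epsilon> x \<omega> n) (frontier D)) *\<^sub>R \<omega> n"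

text \<open>It exists and lies on the boundary almost surely;
  on the remaining null set we put an arbitrary boundary point (this does not affect
  any probability or expectation).\<close>
definition walk_limit :: "'a::euclidean_space set \<Rightarrow> real \<Rightarrow> 'a \<Rightarrow> (nat \<Rightarrow> 'a) \<Rightarrow> 'a" where
  "walk_limit D \<epsilon> x \<omega> =
     (if convergent (ball_walk D \<epsilon> x \<omega>) \<and> lim (ball_walk D \<epsilon> x \<omega>) \<in> frontier D
      then lim (ball_walk D \<epsilon> x \<omega>) else (SOME y. y \<in> frontier D))"

definition walk_regular :: "'a::euclidean_space set \<Rightarrow> 'a \<Rightarrow> bool" where
  "walk_regular D y0 \<longleftrightarrow>
     (\<forall>\<eta>>0. \<forall>\<delta>>0. \<exists>\<delta>'. 0 < \<delta>' \<and> \<delta>' < \<delta> \<and> (\<exists>\<epsilon>'. 0 < \<epsilon>' \<and> \<epsilon>' < 1 \<and>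
        (\<forall>\<epsilon>. 0 < \<epsilon> \<and> \<epsilon> < \<epsilon>' \<longrightarrow> (\<forall>x0 \<in> ball y0 \<delta>' \<inter> D.
           measure walk_space {\<omega> \<in> space walk_space. walk_limit D \<epsilon> x0 \<omega> \<in> ball y0 \<delta>}
             \<ge> 1 - \<eta>))))"

definition walk_value :: "'a::euclidean_space set \<Rightarrow> ('a \<Rightarrow> real) \<Rightarrow> real \<Rightarrow> 'a \<Rightarrow> real" where
  "walk_value D F \<epsilon> x = (\<integral>\<omega>. F (walk_limit D \<epsilon> x \<omega>) \<partial>walk_space)"

end

theory Submission imports Defs begin

text \<open>Continuity of \<open>F\<close> at \<open>y0\<close> makes \<open>F X - F y0\<close> small on the event that the exit point
  \<open>X\<close> lands close to \<open>y0\<close>; walk regularity makes the complementary event unlikely, uniformly in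
  \<open>\<epsilon>\<close> and in starting points near \<open>y0\<close>; and \<open>F\<close> is bounded on the compact boundary, so that
  event contributes little to the expectation.\<close>

lemma prob_space_ball_space: "prob_space (ball_space :: 'a::euclidean_space measure)"
  unfolding ball_space_def
proof (rule prob_space_uniform_measure)
  have "measure lborel (ball (0::'a) 1) > 0"
    by (rule content_ball_pos) simp
  then show "emeasure lborel (ball (0::'a) 1) \<noteq> 0"
    by (auto simp: measure_def)
  show "emeasure lborel (ball (0::'a) 1) \<noteq> \<infinity>"
    using emeasure_lborel_ball_finite[of 0 1] by (simp add: less_top)
qed

lemma sets_ball_space[measurable_cong]: "sets (ball_space :: 'a::euclidean_space measure) = sets borel"
  unfolding ball_space_def by simp

lemma prob_space_walk_space: "prob_space (walk_space :: (nat \<Rightarrow> 'a::euclidean_space) measure)"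
proof -
  interpret product_prob_space "\<lambda>_. ball_space :: 'a measure" UNIV
    by (simp add: product_prob_space_def product_sigma_finite_def prob_space_ball_space
        prob_space_imp_sigma_finite product_prob_space_axioms_def)
  show ?thesis
    unfolding walk_space_def by (rule P.prob_space_axioms)
qed

lemma borel_measurable_walk_step[measurable]:
  "(\<lambda>\<omega>. \<omega> n) \<in> borel_measurable (walk_space :: (nat \<Rightarrow> 'a::euclidean_space) measure)"
proof -
  have "(\<lambda>\<omega>. \<omega> n) \<in> measurable walk_space (ball_space :: 'a measure)"
    unfolding walk_space_def by (rule measurable_component_singleton) simp
  then show ?thesis
    by (simp add: measurable_cong_sets[OF refl sets_ball_space])
qed

lemma borel_measurable_ball_walk[measurable]:
  "(\<lambda>\<omega>. ball_walk D \<epsilon> x \<omega> n) \<in> borel_measurable (walk_space :: (nat \<Rightarrow> 'a::euclidean_space) measure)"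
proof (induction n)
  case 0
  then show ?case by simp
next
  case (Suc n)
  have "(\<lambda>\<omega>. infdist (ball_walk D \<epsilon> x \<omega> n) (frontier D)) \<in> borel_measurable walk_space"
    by (rule borel_measurable_continuous_on[OF _ Suc])
      (intro continuous_at_imp_continuous_on ballI continuous_infdist continuous_ident)
  with Suc show ?case
    by simp
qed

lemma borel_measurable_walk_limit[measurable]:
  "walk_limit D \<epsilon> x \<in> borel_measurable (walk_space :: (nat \<Rightarrow> 'a::euclidean_space) measure)"
proof -
  have lim: "(\<lambda>\<omega>. lim (ball_walk D \<epsilon> x \<omega>)) \<in> borel_measurable walk_space"
    using borel_measurable_lim_metric[of "\<lambda>i \<omega>. ball_walk D \<epsilon> x \<omega> i"] by simp
  have "Measurable.pred walk_space (\<lambda>\<omega>. convergent (ball_walk D \<epsilon> x \<omega>))"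
    using sets_Collect_Cauchy[of "\<lambda>i \<omega>. ball_walk D \<epsilon> x \<omega> i", OF borel_measurable_ball_walk]
    by (simp add: pred_def Cauchy_convergent_iff)
  moreover have "Measurable.pred walk_space (\<lambda>\<omega>. lim (ball_walk D \<epsilon> x \<omega>) \<in> frontier D)"
    by (rule pred_sets2[OF _ lim]) simp
  ultimately show ?thesis
    unfolding walk_limit_def[abs_def] by (intro measurable_If[OF lim measurable_const]) (auto simp: pred_def)
qed

lemma walk_limit_in_frontier: "frontier D \<noteq> {} \<Longrightarrow> walk_limit D \<epsilon> x \<omega> \<in> frontier D"
  unfolding walk_limit_def by (auto intro: someI_ex)

lemma borel_measurable_walk_limit_comp:
  fixes F :: "'a::euclidean_space \<Rightarrow> real"
  assumes "continuous_on (frontier D) F" and "frontier D \<noteq> {}"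
  shows "(\<lambda>\<omega>. F (walk_limit D \<epsilon> x \<omega>)) \<in> borel_measurable walk_space"
proof -
  have "(\<lambda>y. indicator (frontier D) y *\<^sub>R F y) \<in> borel_measurable borel"
    using assms(1) by (intro borel_measurable_continuous_on_indicator) auto
  from measurable_compose[OF borel_measurable_walk_limit[of D \<epsilon> x] this]
  show ?thesis
    using walk_limit_in_frontier[OF assms(2)] by simp
qed

lemma (in prob_space) abs_expectation_diff_le:
  fixes g :: "'a \<Rightarrow> real"
  assumes g: "g \<in> borel_measurable M" and A: "A \<in> events" and "0 \<le> e"
    and bound: "\<And>\<omega>. \<omega> \<in> space M \<Longrightarrow> \<bar>g \<omega> - c\<bar> \<le> K"
    and near: "\<And>\<omega>. \<omega> \<in> A \<Longrightarrow> \<bar>g \<omega> - c\<bar> \<le> e"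
  shows "\<bar>expectation g - c\<bar> \<le> e + K * (1 - prob A)"
proof -
  have int_g: "integrable M g"
    by (rule integrable_const_bound[where B="\<bar>c\<bar> + K"]) (use g in \<open>auto dest!: bound\<close>)
  have int_ind: "integrable M (indicator (space M - A) :: 'a \<Rightarrow> real)"
    using A by (intro integrable_real_indicator) (auto simp: emeasure_eq_measure)
  have "\<bar>expectation g - c\<bar> = \<bar>expectation (\<lambda>\<omega>. g \<omega> - c)\<bar>"
    using int_g by (simp add: prob_space)
  also have "\<dots> \<le> expectation (\<lambda>\<omega>. \<bar>g \<omega> - c\<bar>)"
    by (rule integral_abs_bound)
  also have "\<dots> \<le> expectation (\<lambda>\<omega>. e + K * indicator (space M - A) \<omega>)"
  proof (rule integral_mono)
    fix \<omega> assume "\<omega> \<in> space M"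
    then show "\<bar>g \<omega> - c\<bar> \<le> e + K * indicator (space M - A) \<omega>"
      using bound[of \<omega>] near[of \<omega>] \<open>0 \<le> e\<close> by (cases "\<omega> \<in> A") auto
  qed (use int_g int_ind in auto)
  also have "\<dots> = e + K * prob (space M - A)"
    using int_ind A by (simp add: prob_space)
  also have "\<dots> = e + K * (1 - prob A)"
    using prob_compl[OF A] by simp
  finally show ?thesis .
qed

lemma walk_value_near_boundary_value:
  fixes F :: "'a::euclidean_space \<Rightarrow> real"
  assumes cont: "continuous_on (frontier D) F" and y0: "y0 \<in> frontier D" and "0 \<le> e"
    and bound: "\<And>y. y \<in> frontier D \<Longrightarrow> \<bar>F y\<bar> \<le> B"
    and near: "\<And>y. y \<in> frontier D \<Longrightarrow> dist y y0 < d \<Longrightarrow> dist (F y) (F y0) \<le> e"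
  shows "\<bar>walk_value D F \<epsilon> x - F y0\<bar>
    \<le> e + 2 * B * (1 - measure walk_space {\<omega> \<in> space walk_space. walk_limit D \<epsilon> x \<omega> \<in> ball y0 d})"
  unfolding walk_value_def
proof (rule prob_space.abs_expectation_diff_le[OF prob_space_walk_space])
  have X: "walk_limit D \<epsilon> x \<omega> \<in> frontier D" for \<omega>
    using walk_limit_in_frontier y0 by blast
  show "(\<lambda>\<omega>. F (walk_limit D \<epsilon> x \<omega>)) \<in> borel_measurable walk_space"
    using cont y0 by (intro borel_measurable_walk_limit_comp) auto
  show "\<bar>F (walk_limit D \<epsilon> x \<omega>) - F y0\<bar> \<le> 2 * B" for \<omega>
    using bound[OF X[of \<omega>]] bound[OF y0] by (simp add: abs_le_iff)
  show "\<bar>F (walk_limit D \<epsilon> x \<omega>) - F y0\<bar> \<le> e"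
    if "\<omega> \<in> {\<omega> \<in> space walk_space. walk_limit D \<epsilon> x \<omega> \<in> ball y0 d}" for \<omega>
    using near[OF X[of \<omega>]] that by (simp add: dist_commute dist_real_def)
qed (use \<open>0 \<le> e\<close> in auto)

theorem lemma2p13:
  fixes D :: "'a::euclidean_space set" and y0 :: 'a and F :: "'a \<Rightarrow> real"
  assumes "open D" and "bounded D" and "connected D"
    and "y0 \<in> frontier D" and "walk_regular D y0"
    and "continuous_on (frontier D) F"
  shows "\<forall>\<eta>>0. \<exists>\<delta>'>0. \<exists>\<epsilon>'. 0 < \<epsilon>' \<and> \<epsilon>' < 1 \<and>
           (\<forall>\<epsilon>. 0 < \<epsilon> \<and> \<epsilon> < \<epsilon>' \<longrightarrow> (\<forall>x0 \<in> ball y0 \<delta>' \<inter> D.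
              \<bar>walk_value D F \<epsilon> x0 - F y0\<bar> \<le> \<eta>))"
proof (intro allI impI)
  fix \<eta> :: real assume "\<eta> > 0"
  have "bounded (F ` frontier D)"
    using assms(2,6) by (intro compact_imp_bounded compact_continuous_image) auto
  then obtain B where "B > 0" and B: "\<And>y. y \<in> frontier D \<Longrightarrow> \<bar>F y\<bar> \<le> B"
    by (auto simp: bounded_pos)
  obtain d where "d > 0" and d: "\<And>y. y \<in> frontier D \<Longrightarrow> dist y y0 < d \<Longrightarrow> dist (F y) (F y0) < \<eta> / 2"
    using assms(4,6) \<open>\<eta> > 0\<close> unfolding continuous_on_iff by (metis half_gt_zero)
  have "\<eta> / (4 * B) > 0"
    using \<open>\<eta> > 0\<close> \<open>B > 0\<close> by simp
  from assms(5)[unfolded walk_regular_def, rule_format, OF this \<open>d > 0\<close>]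
  obtain \<delta>' \<epsilon>' where "0 < \<delta>'" "0 < \<epsilon>'" "\<epsilon>' < 1" and regular:
    "\<And>\<epsilon> x0. 0 < \<epsilon> \<and> \<epsilon> < \<epsilon>' \<Longrightarrow> x0 \<in> ball y0 \<delta>' \<inter> D \<Longrightarrow>
       measure walk_space {\<omega> \<in> space walk_space. walk_limit D \<epsilon> x0 \<omega> \<in> ball y0 d} \<ge> 1 - \<eta> / (4 * B)"
    by blast
  have "\<bar>walk_value D F \<epsilon> x0 - F y0\<bar> \<le> \<eta>" if "0 < \<epsilon> \<and> \<epsilon> < \<epsilon>'" "x0 \<in> ball y0 \<delta>' \<inter> D" for \<epsilon> x0
  proof -
    let ?p = "measure walk_space {\<omega> \<in> space walk_space. walk_limit D \<epsilon> x0 \<omega> \<in> ball y0 d}"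
    have "\<bar>walk_value D F \<epsilon> x0 - F y0\<bar> \<le> \<eta> / 2 + 2 * B * (1 - ?p)"
      using \<open>\<eta> > 0\<close> by (intro walk_value_near_boundary_value[OF assms(6,4) _ B]) (auto dest: d)
    also have "\<dots> \<le> \<eta> / 2 + 2 * B * (\<eta> / (4 * B))"
      using regular[OF that] \<open>B > 0\<close> by (intro add_left_mono mult_left_mono) auto
    also have "\<dots> = \<eta>"
      using \<open>B > 0\<close> by simp
    finally show ?thesis .
  qed
  with \<open>0 < \<delta>'\<close> \<open>0 < \<epsilon>'\<close> \<open>\<epsilon>' < 1\<close> show "\<exists>\<delta>'>0. \<exists>\<epsilon>'. 0 < \<epsilon>' \<and> \<epsilon>' < 1 \<and>
           (\<forall>\<epsilon>. 0 < \<epsilon> \<and> \<epsilon> < \<epsilon>' \<longrightarrow> (\<forall>x0 \<in> ball y0 \<delta>' \<inter> D.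
              \<bar>walk_value D F \<epsilon> x0 - F y0\<bar> \<le> \<eta>))"
    by blast
qed

end
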